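(* A finitely generated group $G$ admits a transitive translation-like action by $\mathbb{Z}$ if and only if $G$ has a Cayley graph admitting a bi-infinite Hamiltonian path.
   Context: A finitely generated group $G$ is given the word metric $d_S(g,h)=\min\{n : g^{-1}h\in (S\cup S^{-1})^n\}$ for a finite generating set $S$; all such metrics are bilipschitz equivalent, so the notion below does not depend on $S$. For a group $H$ and a metric space $(X,d)$, a right action $*$ of $H$ on $X$ is translation-like if it is free ($x*h=x$ implies $h=1_H$) and for every $h\in H$ the set $\{d(x,x*h): x\in X\}$ is bounded. A Cayley graph of $G$ means $\mathrm{Cay}(G;S)$ for a finite generating set $S$: vertex set $G$, with $g$ adjacent to $gs$ for $s\in S\cup S^{-1}$. A bi-infinite Hamiltonian path is a bijection $P:\mathbb{Z}\to V$ onto the vertex set with $P(i)$ adjacent to $P(i+1)$ for all $i$. *)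

theory Defs
  imports "HOL-Algebra.Algebra"
begin

definition fin_gen_set :: "('a, 'b) monoid_scheme \<Rightarrow> 'a set \<Rightarrow> bool" where
  "fin_gen_set G S \<longleftrightarrow> finite S \<and> S \<subseteq> carrier G \<and> generate G S = carrier G"

definition sym_gens :: "('a, 'b) monoid_scheme \<Rightarrow> 'a set \<Rightarrow> 'a set" where
  "sym_gens G S = S \<union> (\<lambda>s. inv\<^bsub>G\<^esub> s) ` S"

fun sym_pow :: "('a, 'b) monoid_scheme \<Rightarrow> 'a set \<Rightarrow> nat \<Rightarrow> 'a set" where
  "sym_pow G S 0 = {\<one>\<^bsub>G\<^esub>}"
| "sym_pow G S (Suc n) = {x \<otimes>\<^bsub>G\<^esub> s | x s. x \<in> sym_pow G S n \<and> s \<in> sym_gens G S}"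

definition word_dist :: "('a, 'b) monoid_scheme \<Rightarrow> 'a set \<Rightarrow> 'a \<Rightarrow> 'a \<Rightarrow> nat" where
  "word_dist G S g h = (LEAST n. inv\<^bsub>G\<^esub> g \<otimes>\<^bsub>G\<^esub> h \<in> sym_pow G S n)"

definition int_right_action :: "('a, 'b) monoid_scheme \<Rightarrow> ('a \<Rightarrow> int \<Rightarrow> 'a) \<Rightarrow> bool" where
  "int_right_action G act \<longleftrightarrow>
     (\<forall>x\<in>carrier G. \<forall>n. act x n \<in> carrier G) \<and>
     (\<forall>x\<in>carrier G. act x 0 = x) \<and>
     (\<forall>x\<in>carrier G. \<forall>m n. act x (m + n) = act (act x m) n)"

definition translation_like_Z ::
    "('a, 'b) monoid_scheme \<Rightarrow> ('a \<Rightarrow> 'a \<Rightarrow> nat) \<Rightarrow> ('a \<Rightarrow> int \<Rightarrow> 'a) \<Rightarrow> bool" where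
  "translation_like_Z G d act \<longleftrightarrow>
     int_right_action G act \<and>
     (\<forall>x\<in>carrier G. \<forall>n. act x n = x \<longrightarrow> n = 0) \<and>
     (\<forall>n. \<exists>B. \<forall>x\<in>carrier G. d x (act x n) \<le> B)"

definition transitive_Z_action :: "('a, 'b) monoid_scheme \<Rightarrow> ('a \<Rightarrow> int \<Rightarrow> 'a) \<Rightarrow> bool" where
  "transitive_Z_action G act \<longleftrightarrow> (\<forall>x\<in>carrier G. \<forall>y\<in>carrier G. \<exists>n. act x n = y)"

definition cay_adj :: "('a, 'b) monoid_scheme \<Rightarrow> 'a set \<Rightarrow> 'a \<Rightarrow> 'a \<Rightarrow> bool" where
  "cay_adj G S g h \<longleftrightarrow> g \<in> carrier G \<and> (\<exists>s\<in>sym_gens G S. h = g \<otimes>\<^bsub>G\<^esub> s)"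

definition biinf_ham_path :: "('a, 'b) monoid_scheme \<Rightarrow> 'a set \<Rightarrow> (int \<Rightarrow> 'a) \<Rightarrow> bool" where
  "biinf_ham_path G S P \<longleftrightarrow> bij_betw P UNIV (carrier G) \<and> (\<forall>i. cay_adj G S (P i) (P (i + 1)))"

end

theory Submission
  imports Defs
begin

text \<open>A transitive free action of \<open>\<int>\<close> on \<open>G\<close> is the same thing as a bijection \<open>P : \<int> \<rightarrow> G\<close>,
  namely an orbit map \<open>i \<mapsto> x\<^sub>0 \<cdot> i\<close>. The action is translation-like iff \<open>P\<close> moves a bounded
  word distance per step: one direction because the action of \<open>1\<close> is bounded, the other by the
  triangle inequality, which bounds the displacement of \<open>n\<close> by \<open>|n|\<close> times the step bound.
  Points at word distance at most \<open>r\<close> are adjacent in the Cayley graph with respect to the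
  (finite) ball of radius \<open>r\<close>; conversely, the generators of any finite generating set have
  bounded length in the given word metric.\<close>

definition word_ball :: "('a, 'b) monoid_scheme \<Rightarrow> 'a set \<Rightarrow> nat \<Rightarrow> 'a set" where
  "word_ball G S r = (\<Union>n\<le>r. sym_pow G S n)"

context group
begin

lemma sym_gens_closed: "S \<subseteq> carrier G \<Longrightarrow> sym_gens G S \<subseteq> carrier G"
  unfolding sym_gens_def by auto

lemma inv_sym_gens: "S \<subseteq> carrier G \<Longrightarrow> s \<in> sym_gens G S \<Longrightarrow> inv s \<in> sym_gens G S"
  unfolding sym_gens_def by (auto simp: subsetD)

lemma finite_sym_gens: "finite S \<Longrightarrow> finite (sym_gens G S)"
  unfolding sym_gens_def by simp

lemma sym_pow_closed:
  assumes "S \<subseteq> carrier G"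
  shows "sym_pow G S n \<subseteq> carrier G"
  by (induction n) (use sym_gens_closed[OF assms] in auto)

lemma finite_sym_pow:
  assumes "finite S"
  shows "finite (sym_pow G S n)"
proof (induction n)
  case (Suc n)
  have "sym_pow G S (Suc n) = (\<lambda>(x, s). x \<otimes> s) ` (sym_pow G S n \<times> sym_gens G S)"
    by auto
  then show ?case
    using Suc finite_sym_gens[OF assms] by simp
qed simp

lemma sym_pow_mult:
  assumes "S \<subseteq> carrier G" "x \<in> sym_pow G S a" "y \<in> sym_pow G S b"
  shows "x \<otimes> y \<in> sym_pow G S (a + b)"
  using assms(3)
proof (induction b arbitrary: y)
  case 0
  have "x \<in> carrier G"
    using assms(2) sym_pow_closed[OF assms(1)] by blast
  then show ?case
    using 0 assms(2) by simp
next
  case (Suc b)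
  then obtain y' s where y: "y = y' \<otimes> s" "y' \<in> sym_pow G S b" "s \<in> sym_gens G S"
    by auto
  have "x \<in> carrier G" "y' \<in> carrier G" "s \<in> carrier G"
    using y assms(1,2) sym_pow_closed sym_gens_closed by blast+
  then have "x \<otimes> y = (x \<otimes> y') \<otimes> s"
    using y(1) by (simp add: m_assoc)
  moreover have "x \<otimes> y' \<in> sym_pow G S (a + b)"
    using Suc.IH y(2) .
  ultimately show ?case
    using y(3) by auto
qed

lemma sym_gens_subset_sym_pow_1:
  assumes "S \<subseteq> carrier G"
  shows "sym_gens G S \<subseteq> sym_pow G S 1"
proof
  fix s
  assume "s \<in> sym_gens G S"
  moreover have "s = \<one> \<otimes> s"
    using calculation sym_gens_closed[OF assms] by auto
  ultimately show "s \<in> sym_pow G S 1"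
    by auto
qed

lemma inv_sym_pow:
  assumes "S \<subseteq> carrier G" "x \<in> sym_pow G S n"
  shows "inv x \<in> sym_pow G S n"
  using assms(2)
proof (induction n arbitrary: x)
  case (Suc n)
  then obtain y s where y: "x = y \<otimes> s" "y \<in> sym_pow G S n" "s \<in> sym_gens G S"
    by auto
  have "y \<in> carrier G" "s \<in> carrier G"
    using y assms(1) sym_pow_closed sym_gens_closed by blast+
  then have "inv x = inv s \<otimes> inv y"
    using y(1) by (simp add: inv_mult_group)
  moreover have "inv s \<in> sym_pow G S 1"
    using sym_gens_subset_sym_pow_1[OF assms(1)] inv_sym_gens[OF assms(1) y(3)] by blast
  ultimately show ?case
    using sym_pow_mult[OF assms(1), of "inv s" 1 "inv y" n] Suc.IH[OF y(2)] by simp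
qed simp

lemma generate_imp_sym_pow:
  assumes "S \<subseteq> carrier G" "x \<in> generate G S"
  shows "\<exists>n. x \<in> sym_pow G S n"
  using assms(2)
proof (induction rule: generate.induct)
  case one
  show ?case by (rule exI[of _ 0]) simp
next
  case (incl h)
  then have "h \<in> sym_gens G S"
    by (simp add: sym_gens_def)
  then show ?case
    using sym_gens_subset_sym_pow_1[OF assms(1)] by blast
next
  case (inv h)
  then have "inv h \<in> sym_gens G S"
    by (simp add: sym_gens_def)
  then show ?case
    using sym_gens_subset_sym_pow_1[OF assms(1)] by blast
next
  case (eng h1 h2)
  then show ?case
    using sym_pow_mult[OF assms(1)] by blast
qed

lemma word_dist_le: "inv g \<otimes> h \<in> sym_pow G S n \<Longrightarrow> word_dist G S g h \<le> n"
  unfolding word_dist_def by (rule Least_le)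

lemma word_dist_mem:
  assumes "fin_gen_set G S" "g \<in> carrier G" "h \<in> carrier G"
  shows "inv g \<otimes> h \<in> sym_pow G S (word_dist G S g h)"
proof -
  have "S \<subseteq> carrier G" "generate G S = carrier G"
    using assms(1) unfolding fin_gen_set_def by simp_all
  then have "\<exists>n. inv g \<otimes> h \<in> sym_pow G S n"
    using assms(2,3) generate_imp_sym_pow by simp
  then show ?thesis
    unfolding word_dist_def by (rule LeastI_ex)
qed

lemma word_dist_commute:
  assumes "fin_gen_set G S" "g \<in> carrier G" "h \<in> carrier G"
  shows "word_dist G S g h = word_dist G S h g"
proof -
  have S: "S \<subseteq> carrier G"
    using assms(1) unfolding fin_gen_set_def by simp
  have le: "word_dist G S y x \<le> word_dist G S x y"
    if "x \<in> carrier G" "y \<in> carrier G" for x y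
  proof (rule word_dist_le)
    have "inv y \<otimes> x = inv (inv x \<otimes> y)"
      using that by (simp add: inv_mult_group)
    then show "inv y \<otimes> x \<in> sym_pow G S (word_dist G S x y)"
      using inv_sym_pow[OF S word_dist_mem[OF assms(1) that]] by simp
  qed
  show ?thesis
    using le[OF assms(2,3)] le[OF assms(3,2)] by simp
qed

lemma word_dist_triangle:
  assumes "fin_gen_set G S" "g \<in> carrier G" "h \<in> carrier G" "k \<in> carrier G"
  shows "word_dist G S g k \<le> word_dist G S g h + word_dist G S h k"
proof (rule word_dist_le)
  have "inv g \<otimes> k = (inv g \<otimes> h) \<otimes> (inv h \<otimes> k)"
    using assms(2-4) by (simp add: m_assoc[symmetric] inv_solve_right)
  moreover have "S \<subseteq> carrier G"
    using assms(1) unfolding fin_gen_set_def by simp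
  ultimately show "inv g \<otimes> k \<in> sym_pow G S (word_dist G S g h + word_dist G S h k)"
    using sym_pow_mult word_dist_mem[OF assms(1)] assms(2-4) by simp
qed

lemma word_dist_mult_left:
  assumes "g \<in> carrier G" "t \<in> carrier G"
  shows "word_dist G S g (g \<otimes> t) = word_dist G S \<one> t"
  using assms unfolding word_dist_def by (simp add: m_assoc[symmetric])

lemma word_dist_along_path:
  assumes S: "fin_gen_set G S" and P: "\<And>i. P i \<in> carrier G"
    and step: "\<And>i. word_dist G S (P i) (P (i + 1)) \<le> C"
  shows "word_dist G S (P i) (P (i + n)) \<le> C * nat \<bar>n\<bar>"
proof -
  have forward: "word_dist G S (P j) (P (j + int m)) \<le> C * m" for j m
  proof (induction m)
    case (Suc m)
    have "j + int (Suc m) = j + int m + 1"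
      by simp
    then have "word_dist G S (P j) (P (j + int (Suc m)))
        \<le> word_dist G S (P j) (P (j + int m)) + word_dist G S (P (j + int m)) (P (j + int m + 1))"
      using word_dist_triangle[OF S P P P] by presburger
    also have "\<dots> \<le> C * m + C"
      using Suc.IH step by (rule add_mono)
    finally show ?case by simp
  qed (use P in \<open>simp add: word_dist_def\<close>)
  show ?thesis
  proof (cases "n \<ge> 0")
    case True
    then show ?thesis
      using forward[of i "nat n"] by simp
  next
    case False
    then have "word_dist G S (P (i + n)) (P (i + n + int (nat \<bar>n\<bar>))) \<le> C * nat \<bar>n\<bar>"
      using forward by blast
    then show ?thesis
      using False word_dist_commute[OF S P P] by simp
  qed
qed

lemma fin_gen_set_word_ball:
  assumes "fin_gen_set G S" "1 \<le> r"
  shows "fin_gen_set G (word_ball G S r)"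
proof -
  have S: "finite S" "S \<subseteq> carrier G" "generate G S = carrier G"
    using assms(1) unfolding fin_gen_set_def by auto
  have ball: "word_ball G S r \<subseteq> carrier G"
    unfolding word_ball_def using sym_pow_closed[OF S(2)] by auto
  have "S \<subseteq> sym_pow G S 1"
    using sym_gens_subset_sym_pow_1[OF S(2)] unfolding sym_gens_def by auto
  also have "sym_pow G S 1 \<subseteq> word_ball G S r"
    unfolding word_ball_def using assms(2) by (intro UN_upper) simp
  finally have "generate G S \<subseteq> generate G (word_ball G S r)"
    by (rule mono_generate)
  then have "generate G (word_ball G S r) = carrier G"
    using generate_incl[OF ball] S(3) by (intro subset_antisym) simp_all
  moreover have "finite (word_ball G S r)"
    unfolding word_ball_def using finite_sym_pow[OF S(1)] by blast
  ultimately show ?thesis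
    using ball unfolding fin_gen_set_def by blast
qed

lemma cay_adj_word_ball:
  assumes "fin_gen_set G S" "g \<in> carrier G" "h \<in> carrier G" "word_dist G S g h \<le> r"
  shows "cay_adj G (word_ball G S r) g h"
proof -
  have "inv g \<otimes> h \<in> word_ball G S r"
    using word_dist_mem[OF assms(1-3)] assms(4) unfolding word_ball_def by blast
  then have "inv g \<otimes> h \<in> sym_gens G (word_ball G S r)"
    unfolding sym_gens_def by simp
  moreover have "h = g \<otimes> (inv g \<otimes> h)"
    using assms(2,3) by (simp add: m_assoc[symmetric])
  ultimately show ?thesis
    unfolding cay_adj_def using assms(2) by (intro conjI bexI) simp_all
qed

lemma cay_adj_word_dist_bounded:
  assumes S0: "fin_gen_set G S0" and S: "fin_gen_set G S"
  obtains C where "\<And>g h. cay_adj G S g h \<Longrightarrow> word_dist G S0 g h \<le> C"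
proof
  let ?C = "Max (insert 0 (word_dist G S0 \<one> ` sym_gens G S))"
  fix g h
  assume "cay_adj G S g h"
  then obtain s where s: "g \<in> carrier G" "s \<in> sym_gens G S" "h = g \<otimes> s"
    unfolding cay_adj_def by blast
  have "s \<in> carrier G"
    using s(2) S sym_gens_closed unfolding fin_gen_set_def by blast
  then have "word_dist G S0 g h = word_dist G S0 \<one> s"
    using s word_dist_mult_left by simp
  also have "\<dots> \<le> ?C"
    using s(2) S finite_sym_gens unfolding fin_gen_set_def by (intro Max_ge) auto
  finally show "word_dist G S0 g h \<le> ?C" .
qed

lemma orbit_map_bij:
  assumes "int_right_action G act" and free: "\<forall>x\<in>carrier G. \<forall>n. act x n = x \<longrightarrow> n = 0"
    and "transitive_Z_action G act" and x0: "x0 \<in> carrier G"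
  shows "bij_betw (act x0) UNIV (carrier G)"
proof -
  have closed: "\<And>n. act x0 n \<in> carrier G"
    and comp: "\<And>m n. act x0 (m + n) = act (act x0 m) n"
    using assms(1) x0 unfolding int_right_action_def by auto
  have "inj (act x0)"
  proof (rule injI)
    fix i j
    assume "act x0 i = act x0 j"
    then have "act (act x0 j) (i - j) = act x0 j"
      using comp[of j "i - j"] by simp
    then show "i = j"
      using free closed by fastforce
  qed
  moreover have "carrier G \<subseteq> range (act x0)"
    using assms(3) x0 unfolding transitive_Z_action_def by (metis rangeI subsetI)
  then have "range (act x0) = carrier G"
    using closed by blast
  ultimately show ?thesis
    unfolding bij_betw_def by simp
qed

lemma shift_along_bij_action:
  assumes P: "bij_betw P UNIV (carrier G)"
  defines "act \<equiv> \<lambda>x n. P (inv_into UNIV P x + n)"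
  shows "int_right_action G act"
    and "\<forall>x\<in>carrier G. \<forall>n. act x n = x \<longrightarrow> n = 0"
    and "transitive_Z_action G act"
proof -
  have inj: "inj P" and closed: "\<And>i. P i \<in> carrier G"
    using P bij_betwE unfolding bij_betw_def by blast+
  have left: "\<And>i. inv_into UNIV P (P i) = i"
    using inj by simp
  have right: "\<And>x. x \<in> carrier G \<Longrightarrow> P (inv_into UNIV P x) = x"
    using P bij_betw_inv_into_right by metis
  show "int_right_action G act"
    unfolding int_right_action_def act_def using closed left right by (simp add: add.assoc)
  show "\<forall>x\<in>carrier G. \<forall>n. act x n = x \<longrightarrow> n = 0"
    unfolding act_def using inj right by (metis add_cancel_left_right inj_eq)
  show "transitive_Z_action G act"
    unfolding transitive_Z_action_def act_def using right
    by (metis add.commute diff_add_cancel)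
qed

lemma ham_path_if_translation_like:
  assumes S0: "fin_gen_set G S0"
    and tl: "translation_like_Z G (word_dist G S0) act" and tr: "transitive_Z_action G act"
  shows "\<exists>S P. fin_gen_set G S \<and> biinf_ham_path G S P"
proof -
  have ra: "int_right_action G act"
    and free: "\<forall>x\<in>carrier G. \<forall>n. act x n = x \<longrightarrow> n = 0"
    using tl unfolding translation_like_Z_def by auto
  obtain B where B: "\<And>x. x \<in> carrier G \<Longrightarrow> word_dist G S0 x (act x 1) \<le> B"
    using tl unfolding translation_like_Z_def by blast
  define P where "P = act \<one>"
  have bij: "bij_betw P UNIV (carrier G)"
    unfolding P_def using orbit_map_bij[OF ra free tr] by simp
  have "cay_adj G (word_ball G S0 (Suc B)) (P i) (P (i + 1))" for i
  proof -
    have Pi: "P i \<in> carrier G" and "P (i + 1) = act (P i) 1" and "act (P i) 1 \<in> carrier G"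
      using ra unfolding P_def int_right_action_def by auto
    then show ?thesis
      using cay_adj_word_ball[OF S0 Pi _ le_SucI[OF B[OF Pi]]] by simp
  qed
  moreover have "fin_gen_set G (word_ball G S0 (Suc B))"
    using fin_gen_set_word_ball[OF S0] by simp
  ultimately show ?thesis
    using bij unfolding biinf_ham_path_def by blast
qed

lemma translation_like_if_ham_path:
  assumes S0: "fin_gen_set G S0" and S: "fin_gen_set G S" and path: "biinf_ham_path G S P"
  shows "\<exists>act. translation_like_Z G (word_dist G S0) act \<and> transitive_Z_action G act"
proof -
  have bij: "bij_betw P UNIV (carrier G)" and adj: "\<And>i. cay_adj G S (P i) (P (i + 1))"
    using path unfolding biinf_ham_path_def by auto
  have closed: "\<And>i. P i \<in> carrier G"
    using bij bij_betwE by blast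
  obtain C where "\<And>g h. cay_adj G S g h \<Longrightarrow> word_dist G S0 g h \<le> C"
    using cay_adj_word_dist_bounded[OF S0 S] by blast
  then have "word_dist G S0 (P i) (P (i + 1)) \<le> C" for i
    using adj by blast
  then have displacement: "word_dist G S0 (P i) (P (i + n)) \<le> C * nat \<bar>n\<bar>" for i n
    by (rule word_dist_along_path[of S0 P, OF S0 closed])
  define act where "act x n = P (inv_into UNIV P x + n)" for x n
  have "word_dist G S0 x (act x n) \<le> C * nat \<bar>n\<bar>" if "x \<in> carrier G" for x n
    using displacement[of "inv_into UNIV P x" n] bij_betw_inv_into_right[OF bij that]
    unfolding act_def by simp
  then have "translation_like_Z G (word_dist G S0) act"
    unfolding translation_like_Z_def act_def
    using shift_along_bij_action(1,2)[OF bij] by blast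
  then show ?thesis
    using shift_along_bij_action(3)[OF bij] unfolding act_def by blast
qed

end

theorem corollary3p2:
  fixes G :: "('a, 'b) monoid_scheme" and S0 :: "'a set"
  assumes "group G"
    and "fin_gen_set G S0"
  shows "(\<exists>act. translation_like_Z G (word_dist G S0) act \<and> transitive_Z_action G act)
     \<longleftrightarrow> (\<exists>S P. fin_gen_set G S \<and> biinf_ham_path G S P)"
  using group.ham_path_if_translation_like[OF assms] group.translation_like_if_ham_path[OF assms]
  by blast

end
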